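(* Let $f:\mathbb{R}^d\to\mathbb{R}$ be differentiable and run AdaSGD (as defined in the context) with parameters $\eta,\gamma>0$ using a stochastic gradient oracle with bounded affine noise with parameters $\sigma_0,\sigma_1\ge0$. Then for all $1\le s\le T$, $$|\tilde\eta_s-\eta_s|\le\frac{2\tilde\eta_s\sqrt{\sigma_0^2+\sigma_1^2\|\nabla f(w_s)\|^2}}{G_s}.$$
   Context: $\|\cdot\|$ is the Euclidean norm. Oracle: queried at $w$, returns random $g(w)$ with $\mathbb{E}[g(w)\mid w]=\nabla f(w)$ and, with probability one, $\|g(w)-\nabla f(w)\|^2\le\sigma_0^2+\sigma_1^2\|\nabla f(w)\|^2$. AdaSGD: arbitrary $w_1$; for $t=1,\dots,T$, $g_t=g(w_t)$, $G_t=\sqrt{\gamma^2+\sum_{s=1}^t\|g_s\|^2}$ ($G_0=\gamma$), $\eta_t=\eta/G_t$, $w_{t+1}=w_t-\eta_tg_t$. Decorrelated step sizes: $\tilde\eta_t=\eta/\sqrt{G_{t-1}^2+(1+\sigma_1^2)\|\nabla f(w_t)\|^2+\sigma_0^2}$. *)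

theory Defs
  imports "HOL-Analysis.Analysis"
begin

definition Gacc :: "real \<Rightarrow> (nat \<Rightarrow> 'a::real_normed_vector) \<Rightarrow> nat \<Rightarrow> real" where
  "Gacc \<gamma> g t = sqrt (\<gamma>\<^sup>2 + (\<Sum>s=1..t. (norm (g s))\<^sup>2))"

definition ada_step :: "real \<Rightarrow> real \<Rightarrow> (nat \<Rightarrow> 'a::real_normed_vector) \<Rightarrow> nat \<Rightarrow> real" where
  "ada_step \<eta> \<gamma> g t = \<eta> / Gacc \<gamma> g t"

definition decor_step :: "real \<Rightarrow> real \<Rightarrow> real \<Rightarrow> real \<Rightarrow> ('a::real_normed_vector \<Rightarrow> 'a)
    \<Rightarrow> (nat \<Rightarrow> 'a) \<Rightarrow> (nat \<Rightarrow> 'a) \<Rightarrow> nat \<Rightarrow> real" where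
  "decor_step \<eta> \<gamma> \<sigma>\<^sub>0 \<sigma>\<^sub>1 gradf w g t =
     \<eta> / sqrt ((Gacc \<gamma> g (t - 1))\<^sup>2 + (1 + \<sigma>\<^sub>1\<^sup>2) * (norm (gradf (w t)))\<^sup>2 + \<sigma>\<^sub>0\<^sup>2)"

end

theory Submission
  imports Defs
begin

text \<open>Both step sizes are \<open>\<eta>\<close> divided by a norm of the form \<open>sqrt (G\<^sub>s\<^sub>-\<^sub>1\<^sup>2 + p\<^sup>2)\<close>,
  namely with \<open>p = \<parallel>g\<^sub>s\<parallel>\<close> for AdaSGD and \<open>p = sqrt (\<parallel>\<nabla>f(w\<^sub>s)\<parallel>\<^sup>2 + S\<^sup>2)\<close> for the decorrelated
  step, where \<open>S\<^sup>2 = \<sigma>\<^sub>0\<^sup>2 + \<sigma>\<^sub>1\<^sup>2 \<parallel>\<nabla>f(w\<^sub>s)\<parallel>\<^sup>2\<close>. Such norms are 1-Lipschitz in \<open>p\<close>, and the two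
  values of \<open>p\<close> differ by at most \<open>2 S\<close>: by \<open>S\<close> when passing from \<open>sqrt (\<parallel>\<nabla>f(w\<^sub>s)\<parallel>\<^sup>2 + S\<^sup>2)\<close>
  to \<open>\<parallel>\<nabla>f(w\<^sub>s)\<parallel>\<close>, and by \<open>S\<close> again from the noise bound \<open>\<parallel>g\<^sub>s - \<nabla>f(w\<^sub>s)\<parallel> \<le> S\<close>.
  The bound then follows from \<open>\<eta>/H - \<eta>/G = (\<eta>/H) (G - H) / G\<close>. It holds pathwise.\<close>

lemma abs_sqrt_add_square_diff_le:
  fixes a p q :: real
  assumes "a \<ge> 0"
  shows "\<bar>sqrt (a + p\<^sup>2) - sqrt (a + q\<^sup>2)\<bar> \<le> \<bar>p - q\<bar>"
proof -
  have norm_eq: "sqrt (a + r\<^sup>2) = norm (sqrt a, r)" for r :: real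
    using assms by (simp add: norm_Pair)
  have "\<bar>norm (sqrt a, p) - norm (sqrt a, q)\<bar> \<le> norm ((sqrt a, p) - (sqrt a, q))"
    by (rule norm_triangle_ineq3)
  then show ?thesis
    by (simp add: norm_eq norm_Pair)
qed

lemma abs_sqrt_add_squares_diff_le:
  fixes a x y S :: real
  assumes "a \<ge> 0" and "y \<ge> 0" and "\<bar>x - y\<bar> \<le> S"
  shows "\<bar>sqrt (a + y\<^sup>2 + S\<^sup>2) - sqrt (a + x\<^sup>2)\<bar> \<le> 2 * S"
proof -
  define p where "p = sqrt (y\<^sup>2 + S\<^sup>2)"
  have p_square: "p\<^sup>2 = y\<^sup>2 + S\<^sup>2"
    unfolding p_def by simp
  have "\<bar>p - y\<bar> \<le> \<bar>S - 0\<bar>"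
    using abs_sqrt_add_square_diff_le[of "y\<^sup>2" S 0] \<open>y \<ge> 0\<close> by (simp add: p_def)
  then have "\<bar>p - x\<bar> \<le> 2 * S"
    using \<open>\<bar>x - y\<bar> \<le> S\<close> by linarith
  moreover have "\<bar>sqrt (a + p\<^sup>2) - sqrt (a + x\<^sup>2)\<bar> \<le> \<bar>p - x\<bar>"
    using \<open>a \<ge> 0\<close> by (rule abs_sqrt_add_square_diff_le)
  ultimately show ?thesis
    by (simp add: p_square add.assoc)
qed

lemma abs_divide_diff_le:
  fixes \<eta> G H D :: real
  assumes "\<eta> \<ge> 0" and "G > 0" and "H > 0" and "\<bar>H - G\<bar> \<le> D"
  shows "\<bar>\<eta> / H - \<eta> / G\<bar> \<le> \<eta> / H * D / G"
proof -
  have "\<eta> / H - \<eta> / G = \<eta> / H * (G - H) / G"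
    using assms(2,3) by (simp add: field_simps)
  then have "\<bar>\<eta> / H - \<eta> / G\<bar> = \<eta> / H * \<bar>H - G\<bar> / G"
    using assms(1-3) by (simp add: abs_mult abs_minus_commute)
  also have "\<dots> \<le> \<eta> / H * D / G"
    using assms by (simp add: divide_right_mono mult_left_mono)
  finally show ?thesis .
qed

lemma Gacc_pos:
  assumes "\<gamma> > 0"
  shows "Gacc \<gamma> g t > 0"
  unfolding Gacc_def using assms by (simp add: add_pos_nonneg sum_nonneg)

lemma Gacc_square:
  "(Gacc \<gamma> g t)\<^sup>2 = \<gamma>\<^sup>2 + (\<Sum>s=1..t. (norm (g s))\<^sup>2)"
  unfolding Gacc_def by (simp add: add_nonneg_nonneg sum_nonneg)

lemma Gacc_Suc:
  "Gacc \<gamma> g (Suc t) = sqrt ((Gacc \<gamma> g t)\<^sup>2 + (norm (g (Suc t)))\<^sup>2)"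
  by (simp add: Gacc_square) (simp add: Gacc_def sum.cl_ivl_Suc add.assoc)

lemma decor_step_eq:
  "decor_step \<eta> \<gamma> \<sigma>\<^sub>0 \<sigma>\<^sub>1 gradf w g t =
     \<eta> / sqrt ((Gacc \<gamma> g (t - 1))\<^sup>2 + (norm (gradf (w t)))\<^sup>2
                + (sqrt (\<sigma>\<^sub>0\<^sup>2 + \<sigma>\<^sub>1\<^sup>2 * (norm (gradf (w t)))\<^sup>2))\<^sup>2)"
  unfolding decor_step_def by (simp add: algebra_simps)

theorem lemma11:
  fixes f :: "real ^ 'd \<Rightarrow> real"
    and gradf :: "real ^ 'd \<Rightarrow> real ^ 'd"
    and w g :: "nat \<Rightarrow> real ^ 'd"
    and \<eta> \<gamma> \<sigma>\<^sub>0 \<sigma>\<^sub>1 :: real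
    and T :: nat
  assumes grad: "\<And>x. (f has_derivative (\<lambda>h. gradf x \<bullet> h)) (at x)"
    and eta_pos: "\<eta> > 0" and gamma_pos: "\<gamma> > 0"
    and sigma0_nonneg: "\<sigma>\<^sub>0 \<ge> 0" and sigma1_nonneg: "\<sigma>\<^sub>1 \<ge> 0"
    and noise: "\<And>t. 1 \<le> t \<Longrightarrow> t \<le> T \<Longrightarrow>
        (norm (g t - gradf (w t)))\<^sup>2 \<le> \<sigma>\<^sub>0\<^sup>2 + \<sigma>\<^sub>1\<^sup>2 * (norm (gradf (w t)))\<^sup>2"
    and update: "\<And>t. 1 \<le> t \<Longrightarrow> t \<le> T \<Longrightarrow>
        w (Suc t) = w t - ada_step \<eta> \<gamma> g t *\<^sub>R g t"
  shows "\<forall>s. 1 \<le> s \<and> s \<le> T \<longrightarrow>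
    \<bar>decor_step \<eta> \<gamma> \<sigma>\<^sub>0 \<sigma>\<^sub>1 gradf w g s - ada_step \<eta> \<gamma> g s\<bar>
      \<le> 2 * decor_step \<eta> \<gamma> \<sigma>\<^sub>0 \<sigma>\<^sub>1 gradf w g s
          * sqrt (\<sigma>\<^sub>0\<^sup>2 + \<sigma>\<^sub>1\<^sup>2 * (norm (gradf (w s)))\<^sup>2) / Gacc \<gamma> g s"
proof (intro allI impI)
  fix s assume s: "1 \<le> s \<and> s \<le> T"
  then obtain t where s_Suc: "s = Suc t"
    by (cases s) auto
  define S where "S = sqrt (\<sigma>\<^sub>0\<^sup>2 + \<sigma>\<^sub>1\<^sup>2 * (norm (gradf (w s)))\<^sup>2)"
  define a where "a = (Gacc \<gamma> g t)\<^sup>2"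
  define H where "H = sqrt (a + (norm (gradf (w s)))\<^sup>2 + S\<^sup>2)"
  have "norm (g s - gradf (w s)) \<le> S"
    unfolding S_def using noise s by (simp add: real_le_rsqrt)
  then have "\<bar>norm (g s) - norm (gradf (w s))\<bar> \<le> S"
    using norm_triangle_ineq3 order_trans by blast
  then have "\<bar>H - Gacc \<gamma> g s\<bar> \<le> 2 * S"
    unfolding H_def s_Suc Gacc_Suc a_def[symmetric]
    by (intro abs_sqrt_add_squares_diff_le) (simp_all add: a_def)
  moreover have "H > 0"
    unfolding H_def a_def using Gacc_pos[OF gamma_pos, of g t] by (simp add: add_pos_nonneg)
  ultimately have "\<bar>\<eta> / H - \<eta> / Gacc \<gamma> g s\<bar> \<le> \<eta> / H * (2 * S) / Gacc \<gamma> g s"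
    using eta_pos Gacc_pos[OF gamma_pos] by (intro abs_divide_diff_le) auto
  moreover have "decor_step \<eta> \<gamma> \<sigma>\<^sub>0 \<sigma>\<^sub>1 gradf w g s = \<eta> / H"
    unfolding decor_step_eq H_def a_def S_def s_Suc by simp
  ultimately show "\<bar>decor_step \<eta> \<gamma> \<sigma>\<^sub>0 \<sigma>\<^sub>1 gradf w g s - ada_step \<eta> \<gamma> g s\<bar>
      \<le> 2 * decor_step \<eta> \<gamma> \<sigma>\<^sub>0 \<sigma>\<^sub>1 gradf w g s
          * sqrt (\<sigma>\<^sub>0\<^sup>2 + \<sigma>\<^sub>1\<^sup>2 * (norm (gradf (w s)))\<^sup>2) / Gacc \<gamma> g s"
    unfolding ada_step_def S_def by (simp add: mult_ac)
qed

end
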